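(* Let $N\ge3$ and $\sigma\in G_N$. Then $$\mathcal F\circ(\sigma\otimes\mathrm{id}_{\mathbb{Q}\langle\langle\widetilde X\rangle\rangle})=\Delta_\sigma\circ\mathcal F\qquad\text{and}\qquad\mathcal F\circ\widetilde\Delta_\sigma=(\sigma\otimes\mathrm{id}_{\mathbb{Q}\langle\langle X\rangle\rangle})\circ\mathcal F.$$
   Context: $\zeta_N=\exp(2\pi i/N)$, $\mu_N$ the complex $N$-th roots of unity, $\iota:\{1,\dots,N\}\to\mathbb{Z}/N\mathbb{Z}$ the residue-class bijection. $K\langle\langle\mathcal L\rangle\rangle$: noncommutative formal power series over $\mathcal L$. Alphabets $X=\{x_0\}\cup\{x_\zeta:\zeta\in\mu_N\}$, $\widetilde X=\{\tilde x\}\cup\{\tilde x_\alpha:\alpha\in\mathbb{Z}/N\mathbb{Z}\}$. $\mathcal F:\mathbb{Q}(\mu_N)\langle\langle\widetilde X\rangle\rangle\to\mathbb{Q}(\mu_N)\langle\langle X\rangle\rangle$ is the continuous $\mathbb{Q}(\mu_N)$-algebra isomorphism $\tilde x\mapsto x_0$, $\tilde x_\alpha\mapsto\sum_{m=1}^N\zeta_N^{-m\iota^{-1}(\alpha)}x_{\zeta_N^m}$. $G_N=\mathrm{Gal}(\mathbb{Q}(\mu_N)/\mathbb{Q})$; each $\sigma\in G_N$ has $\sigma(\zeta_N)=\zeta_N^k$ for a unique $k\in\{1,\dots,N-1\}$ coprime to $N$. $\sigma\otimes\mathrm{id}$ acts on a series by applying $\sigma$ to each coefficient: $\sum_wc_ww\mapsto\sum_w\sigma(c_w)w$.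 $\Delta_\sigma(\sum_wc_ww)=\sum_w\sigma(c_w)\delta_k(w)$ on $\mathbb{Q}(\mu_N)\langle\langle X\rangle\rangle$, where $\delta_k$ is the algebra automorphism $x_0\mapsto x_0$, $x_\zeta\mapsto x_{\zeta^k}$; $\widetilde\Delta_\sigma(\sum_wc_ww)=\sum_w\sigma(c_w)\tilde\delta_k(w)$ on $\mathbb{Q}(\mu_N)\langle\langle\widetilde X\rangle\rangle$, where $\tilde\delta_k$ is the algebra automorphism $\tilde x\mapsto\tilde x$, $\tilde x_\alpha\mapsto\tilde x_{\iota(k)\alpha}$. *)

theory Defs
  imports Complex_Main
begin

definition zetaN :: "nat \<Rightarrow> complex" where
  "zetaN N = exp (2 * of_real pi * \<i> / of_nat N)"

definition muN :: "nat \<Rightarrow> complex set" where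
  "muN N = {z. z ^ N = 1}"

definition is_subfield :: "complex set \<Rightarrow> bool" where
  "is_subfield K \<longleftrightarrow> 0 \<in> K \<and> 1 \<in> K \<and>
     (\<forall>x\<in>K. \<forall>y\<in>K. x + y \<in> K \<and> x - y \<in> K \<and> x * y \<in> K) \<and>
     (\<forall>x\<in>K. x \<noteq> 0 \<longrightarrow> inverse x \<in> K)"

definition QmuN :: "nat \<Rightarrow> complex set" where
  "QmuN N = \<Inter>{K. is_subfield K \<and> muN N \<subseteq> K}"

text \<open>The Galois group G_N: field automorphisms of Q(mu_N) (they fix Q automatically).
  An element is represented by a function on the complex numbers; only its values on
  Q(mu_N) matter.\<close>
definition GalN :: "nat \<Rightarrow> (complex \<Rightarrow> complex) set" where
  "GalN N = {\<sigma>. bij_betw \<sigma> (QmuN N) (QmuN N) \<and> \<sigma> 1 = 1 \<and>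
     (\<forall>x\<in>QmuN N. \<forall>y\<in>QmuN N. \<sigma> (x + y) = \<sigma> x + \<sigma> y \<and> \<sigma> (x * y) = \<sigma> x * \<sigma> y)}"

definition gal_exp :: "nat \<Rightarrow> (complex \<Rightarrow> complex) \<Rightarrow> nat" where
  "gal_exp N \<sigma> = (THE k. 1 \<le> k \<and> k \<le> N - 1 \<and> coprime k N \<and> \<sigma> (zetaN N) = zetaN N ^ k)"

text \<open>Letters. Alphabet X = {x_0} \<union> {x_zeta : zeta \<in> mu_N};
  alphabet X~ = {x~} \<union> {x~_alpha : alpha \<in> Z/NZ}, residue classes represented by
  their representatives in {0..<N}.\<close>
datatype xletter = X0 | XZ complex
datatype tletter = T0 | TA nat

definition Xalph :: "nat \<Rightarrow> xletter set" where
  "Xalph N = insert X0 (XZ ` muN N)"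

definition Talph :: "nat \<Rightarrow> tletter set" where
  "Talph N = insert T0 (TA ` {0..<N})"

definition serX :: "nat \<Rightarrow> (xletter list \<Rightarrow> complex) set" where
  "serX N = {f. (\<forall>w. w \<notin> lists (Xalph N) \<longrightarrow> f w = 0) \<and> (\<forall>w. f w \<in> QmuN N)}"

definition serT :: "nat \<Rightarrow> (tletter list \<Rightarrow> complex) set" where
  "serT N = {f. (\<forall>w. w \<notin> lists (Talph N) \<longrightarrow> f w = 0) \<and> (\<forall>w. f w \<in> QmuN N)}"

text \<open>The residue class bijection iota : {1..N} \<rightarrow> Z/NZ, its inverse, and
  iota(k)*alpha in Z/NZ.\<close>
definition iota :: "nat \<Rightarrow> nat \<Rightarrow> nat" where
  "iota N m = m mod N"

definition iota_inv :: "nat \<Rightarrow> nat \<Rightarrow> nat" where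
  "iota_inv N a = (if a = 0 then N else a)"

text \<open>Coefficient of the letter y in the image F(t) of the letter t:
  F(x~) = x_0, F(x~_alpha) = sum_{m=1}^N zeta_N^(-m iota^-1(alpha)) x_(zeta_N^m).\<close>
fun Fcoeff :: "nat \<Rightarrow> tletter \<Rightarrow> xletter \<Rightarrow> complex" where
  "Fcoeff N T0 X0 = 1"
| "Fcoeff N T0 (XZ z) = 0"
| "Fcoeff N (TA a) X0 = 0"
| "Fcoeff N (TA a) (XZ z) =
     (\<Sum>m\<in>{1..N}. if zetaN N ^ m = z then inverse (zetaN N ^ (m * iota_inv N a)) else 0)"

text \<open>The continuous algebra map F on series: coefficient of v in
  sum_w c_w F(w_1)...F(w_n).\<close>
definition Fmap :: "nat \<Rightarrow> (tletter list \<Rightarrow> complex) \<Rightarrow> (xletter list \<Rightarrow> complex)" where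
  "Fmap N f v = (\<Sum>w\<in>{w \<in> lists (Talph N). length w = length v}.
       f w * (\<Prod>i<length v. Fcoeff N (w ! i) (v ! i)))"

definition coeffmap :: "(complex \<Rightarrow> complex) \<Rightarrow> ('l list \<Rightarrow> complex) \<Rightarrow> ('l list \<Rightarrow> complex)" where
  "coeffmap \<sigma> f = (\<lambda>w. \<sigma> (f w))"

fun delta :: "nat \<Rightarrow> xletter \<Rightarrow> xletter" where
  "delta k X0 = X0"
| "delta k (XZ z) = XZ (z ^ k)"

fun tdelta :: "nat \<Rightarrow> nat \<Rightarrow> tletter \<Rightarrow> tletter" where
  "tdelta N k T0 = T0"
| "tdelta N k (TA a) = TA ((iota N k * a) mod N)"

text \<open>Delta_sigma(sum_w c_w w) = sum_w sigma(c_w) delta_k(w), coefficientwise.\<close>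
definition Delta :: "nat \<Rightarrow> (complex \<Rightarrow> complex) \<Rightarrow> (xletter list \<Rightarrow> complex) \<Rightarrow> (xletter list \<Rightarrow> complex)" where
  "Delta N \<sigma> f v = (\<Sum>w\<in>{w \<in> lists (Xalph N). map (delta (gal_exp N \<sigma>)) w = v}. \<sigma> (f w))"

definition tDelta :: "nat \<Rightarrow> (complex \<Rightarrow> complex) \<Rightarrow> (tletter list \<Rightarrow> complex) \<Rightarrow> (tletter list \<Rightarrow> complex)" where
  "tDelta N \<sigma> f v = (\<Sum>w\<in>{w \<in> lists (Talph N). map (tdelta N (gal_exp N \<sigma>)) w = v}. \<sigma> (f w))"

end

theory Submission
  imports Defs "HOL-Analysis.Complex_Transcendental" "HOL-Number_Theory.Cong"
begin

(*
  Everything reduces to single letters. A Galois automorphism sigma with sigma(zeta) = zeta^k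
  raises every N-th root of unity to its k-th power, so it sends the coefficient zeta^(-m a)
  of x_(zeta^m) in F(x~_a) to zeta^(-k m a). This is at the same time the coefficient of
  delta_k(x_(zeta^m)) = x_(zeta^(k m)) in F(x~_a) and the coefficient of x_(zeta^m) in
  F(delta~_k(x~_a)) = F(x~_(k a)). As F acts letter by letter, this passes to words. For the
  first identity, k is a unit modulo N, so delta_k permutes the letters of X and every fibre
  of Delta_sigma is a single word; for the second, the sum over the fibres of delta~_k
  regroups into one sum over all words.
*)

lemma zetaN_power: "zetaN N ^ j = exp (2 * of_real pi * \<i> * of_nat j / of_nat N)"
  unfolding zetaN_def by (simp add: exp_of_nat_mult [symmetric] mult_ac)

lemma zetaN_power_eq_iff: "0 < N \<Longrightarrow> zetaN N ^ a = zetaN N ^ b \<longleftrightarrow> [a = b] (mod N)"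
  unfolding zetaN_power cong_def by (rule complex_root_unity_eq) simp

lemma zetaN_power_eq_1_iff: "0 < N \<Longrightarrow> zetaN N ^ a = 1 \<longleftrightarrow> N dvd a"
  unfolding zetaN_power by (rule complex_root_unity_eq_1) simp

lemma muN_iff_zetaN_power: "0 < N \<Longrightarrow> z \<in> muN N \<longleftrightarrow> (\<exists>m<N. z = zetaN N ^ m)"
  unfolding muN_def using complex_roots_unity[of N] by (auto simp: zetaN_power)

lemma zetaN_power_in_muN: "0 < N \<Longrightarrow> zetaN N ^ m \<in> muN N"
  by (simp add: muN_def zetaN_power_eq_1_iff flip: power_mult)

lemma power_in_muN:
  assumes "z \<in> muN N"
  shows "z ^ j \<in> muN N"
proof -
  have "(z ^ j) ^ N = (z ^ N) ^ j"
    by (simp only: mult.commute flip: power_mult)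
  then show ?thesis
    using assms by (simp add: muN_def)
qed

lemma power_mod_in_muN:
  assumes "z \<in> muN N"
  shows "z ^ (i mod N) = z ^ i"
proof -
  have "z ^ i = (z ^ N) ^ (i div N) * z ^ (i mod N)"
    by (simp flip: power_mult power_add)
  then show ?thesis
    using assms by (simp add: muN_def)
qed

lemma power_cong_in_muN: "z \<in> muN N \<Longrightarrow> [i = j] (mod N) \<Longrightarrow> z ^ i = z ^ j"
  unfolding cong_def by (metis power_mod_in_muN)

context
  fixes K :: "complex set"
  assumes K: "is_subfield K"
begin

lemma subfield_zero: "0 \<in> K"
  and subfield_one: "1 \<in> K"
  and subfield_add: "x \<in> K \<Longrightarrow> y \<in> K \<Longrightarrow> x + y \<in> K"
  and subfield_mult: "x \<in> K \<Longrightarrow> y \<in> K \<Longrightarrow> x * y \<in> K"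
  using K unfolding is_subfield_def by blast+

lemma subfield_inverse: "x \<in> K \<Longrightarrow> inverse x \<in> K"
  using K unfolding is_subfield_def by (cases "x = 0") auto

lemma subfield_sum: "(\<And>x. x \<in> A \<Longrightarrow> g x \<in> K) \<Longrightarrow> sum g A \<in> K"
  by (induction A rule: infinite_finite_induct) (auto simp: subfield_zero subfield_add)

lemma subfield_prod: "(\<And>x. x \<in> A \<Longrightarrow> g x \<in> K) \<Longrightarrow> prod g A \<in> K"
  by (induction A rule: infinite_finite_induct) (auto simp: subfield_one subfield_mult)

lemma subfield_power: "x \<in> K \<Longrightarrow> x ^ n \<in> K"
  by (induction n) (auto simp: subfield_one subfield_mult)

end

lemma is_subfield_QmuN: "is_subfield (QmuN N)"
  unfolding is_subfield_def QmuN_def by auto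

lemmas QmuN_zero = subfield_zero [OF is_subfield_QmuN]
  and QmuN_one = subfield_one [OF is_subfield_QmuN]
  and QmuN_add = subfield_add [OF is_subfield_QmuN]
  and QmuN_mult = subfield_mult [OF is_subfield_QmuN]
  and QmuN_inverse = subfield_inverse [OF is_subfield_QmuN]
  and QmuN_sum = subfield_sum [OF is_subfield_QmuN]
  and QmuN_prod = subfield_prod [OF is_subfield_QmuN]
  and QmuN_power = subfield_power [OF is_subfield_QmuN]

lemma muN_subset_QmuN: "muN N \<subseteq> QmuN N"
  unfolding QmuN_def by auto

lemma zetaN_power_in_QmuN: "0 < N \<Longrightarrow> zetaN N ^ m \<in> QmuN N"
  using zetaN_power_in_muN muN_subset_QmuN by blast

lemma zetaN_in_QmuN: "0 < N \<Longrightarrow> zetaN N \<in> QmuN N"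
  using zetaN_power_in_QmuN [of N 1] by simp

lemma Fcoeff_in_QmuN: "0 < N \<Longrightarrow> Fcoeff N t x \<in> QmuN N"
  by (cases t; cases x)
     (auto simp: QmuN_zero QmuN_one intro!: QmuN_sum QmuN_inverse zetaN_power_in_QmuN)

lemma iota_inv_cong: "[iota_inv N a = a] (mod N)"
  by (simp add: iota_inv_def cong_def)

lemma Fcoeff_TA_zetaN_power:
  assumes "0 < N"
  shows "Fcoeff N (TA a) (XZ (zetaN N ^ m)) = inverse (zetaN N ^ (m * a))"
proof -
  define m0 where "m0 = (if m mod N = 0 then N else m mod N)"
  have m0: "m0 \<in> {1..N}" "[m0 = m] (mod N)"
    using assms by (auto simp: m0_def cong_def)
  have "zetaN N ^ m' = zetaN N ^ m \<longleftrightarrow> m' = m0" if "m' \<in> {1..N}" for m'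
  proof -
    have "zetaN N ^ m' = zetaN N ^ m \<longleftrightarrow> [m' = m0] (mod N)"
      using assms m0(2) by (auto simp: zetaN_power_eq_iff cong_def)
    also have "\<dots> \<longleftrightarrow> m' = m0"
      using that m0(1) by (cases "m' = N"; cases "m0 = N") (auto simp: cong_def)
    finally show ?thesis .
  qed
  then have "Fcoeff N (TA a) (XZ (zetaN N ^ m)) =
      (\<Sum>m'\<in>{1..N}. if m' = m0 then inverse (zetaN N ^ (m0 * iota_inv N a)) else 0)"
    by (auto intro!: sum.cong)
  also have "\<dots> = inverse (zetaN N ^ (m0 * iota_inv N a))"
    using m0 by simp
  also have "zetaN N ^ (m0 * iota_inv N a) = zetaN N ^ (m * a)"
    using assms m0(2) iota_inv_cong by (simp add: zetaN_power_eq_iff cong_mult)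
  finally show ?thesis .
qed

lemma Fcoeff_not_muN: "z \<notin> muN N \<Longrightarrow> Fcoeff N t (XZ z) = 0"
  by (cases t) (auto intro!: sum.neutral simp: zetaN_power_in_muN)

lemma Fmap_outside_lists:
  assumes "v \<notin> lists (Xalph N)"
  shows "Fmap N f v = 0"
proof -
  obtain i where i: "i < length v" "v ! i \<notin> Xalph N"
    using assms by (metis in_listsI in_set_conv_nth)
  then obtain z where z: "v ! i = XZ z" "z \<notin> muN N"
    by (cases "v ! i") (auto simp: Xalph_def)
  have vanish: "(\<Prod>i<length v. Fcoeff N (w ! i) (v ! i)) = 0" for w
    using i z by (intro prod_zero bexI [where x = i]) (simp_all add: Fcoeff_not_muN)
  show ?thesis
    unfolding Fmap_def by (simp only: vanish mult_zero_right sum.neutral_const)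
qed

lemma delta_in_Xalph: "x \<in> Xalph N \<Longrightarrow> delta j x \<in> Xalph N"
  by (cases x) (auto simp: Xalph_def power_in_muN)

lemma delta_delta: "delta j (delta k x) = delta (k * j) x"
  by (cases x) (simp_all add: power_mult)

lemma delta_cong_1: "x \<in> Xalph N \<Longrightarrow> [k = 1] (mod N) \<Longrightarrow> delta k x = x"
  by (cases x) (auto simp: Xalph_def dest: power_cong_in_muN)

lemma map_delta_fibre:
  assumes "[k * k' = 1] (mod N)" and "v \<in> lists (Xalph N)"
  shows "{w \<in> lists (Xalph N). map (delta k) w = v} = {map (delta k') v}"
proof -
  have "[k' * k = 1] (mod N)"
    using assms(1) by (simp add: mult.commute)
  then have "map (delta k') (map (delta k) w) = w" if "w \<in> lists (Xalph N)" for w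
    using that assms(1) by (induction w) (auto simp: delta_delta delta_cong_1)
  moreover have "map (delta k) (map (delta k') v) = v"
    using assms \<open>[k' * k = 1] (mod N)\<close> by (induction v) (auto simp: delta_delta delta_cong_1)
  moreover have "map (delta k') v \<in> lists (Xalph N)"
    using assms(2) by (auto simp: delta_in_Xalph)
  ultimately show ?thesis
    by (auto simp del: map_map) (metis in_listsI)
qed

lemma tdelta_in_Talph: "0 < N \<Longrightarrow> t \<in> Talph N \<Longrightarrow> tdelta N j t \<in> Talph N"
  by (cases t) (auto simp: Talph_def)

locale galois_automorphism =
  fixes N :: nat and \<sigma> :: "complex \<Rightarrow> complex"
  assumes N_pos: "0 < N" and Gal: "\<sigma> \<in> GalN N"
begin

lemma hom_add: "x \<in> QmuN N \<Longrightarrow> y \<in> QmuN N \<Longrightarrow> \<sigma> (x + y) = \<sigma> x + \<sigma> y"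
  and hom_mult: "x \<in> QmuN N \<Longrightarrow> y \<in> QmuN N \<Longrightarrow> \<sigma> (x * y) = \<sigma> x * \<sigma> y"
  and hom_one: "\<sigma> 1 = 1"
  and hom_inj: "x \<in> QmuN N \<Longrightarrow> y \<in> QmuN N \<Longrightarrow> \<sigma> x = \<sigma> y \<Longrightarrow> x = y"
  using Gal unfolding GalN_def bij_betw_def inj_on_def by blast+

lemma hom_zero: "\<sigma> 0 = 0"
  using hom_add [OF QmuN_zero QmuN_zero] by simp

lemma hom_power: "x \<in> QmuN N \<Longrightarrow> \<sigma> (x ^ n) = \<sigma> x ^ n"
  by (induction n) (simp_all add: hom_one hom_mult QmuN_power)

lemma hom_inverse:
  assumes "x \<in> QmuN N"
  shows "\<sigma> (inverse x) = inverse (\<sigma> x)"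
proof (cases "x = 0")
  case False
  have "\<sigma> x * \<sigma> (inverse x) = 1"
    using hom_mult [OF assms QmuN_inverse [OF assms]] False hom_one by simp
  then show ?thesis
    by (simp add: inverse_unique)
qed (simp add: hom_zero)

lemma hom_sum: "(\<And>x. x \<in> A \<Longrightarrow> g x \<in> QmuN N) \<Longrightarrow> \<sigma> (sum g A) = (\<Sum>x\<in>A. \<sigma> (g x))"
  by (induction A rule: infinite_finite_induct) (auto simp: hom_zero hom_add QmuN_sum)

lemma hom_prod: "(\<And>x. x \<in> A \<Longrightarrow> g x \<in> QmuN N) \<Longrightarrow> \<sigma> (prod g A) = (\<Prod>x\<in>A. \<sigma> (g x))"
  by (induction A rule: infinite_finite_induct) (auto simp: hom_one hom_mult QmuN_prod)

lemma Fmap_image: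
  assumes "f \<in> serT N"
  shows "\<sigma> (Fmap N f v) = (\<Sum>w\<in>{w \<in> lists (Talph N). length w = length v}.
           \<sigma> (f w) * (\<Prod>i<length v. \<sigma> (Fcoeff N (w ! i) (v ! i))))"
proof -
  have "f w \<in> QmuN N" for w
    using assms by (simp add: serT_def)
  then show ?thesis
    unfolding Fmap_def
    by (simp add: hom_sum hom_prod hom_mult QmuN_mult QmuN_prod Fcoeff_in_QmuN N_pos)
qed

lemma zetaN_image_exponent:
  assumes "2 \<le> N"
  obtains k where "k < N" "coprime k N" "\<sigma> (zetaN N) = zetaN N ^ k"
proof -
  have "\<sigma> (zetaN N) ^ N = 1"
    using hom_power [OF zetaN_in_QmuN [OF N_pos], of N] zetaN_power_eq_1_iff [OF N_pos, of N]
    by (simp add: hom_one)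
  then obtain k where k: "k < N" "\<sigma> (zetaN N) = zetaN N ^ k"
    using muN_iff_zetaN_power [OF N_pos] unfolding muN_def by blast
  have "coprime k N"
  proof (rule ccontr)
    define g where "g = gcd k N"
    assume "\<not> coprime k N"
    then have "1 < g"
      using N_pos unfolding g_def coprime_iff_gcd_eq_1 by (metis gcd_pos_nat less_one nat_neq_iff)
    obtain e where N_eq: "N = g * e"
      unfolding g_def using gcd_dvd2 by (rule dvdE)
    have "0 < e" "e < N"
      using N_pos \<open>1 < g\<close> unfolding N_eq by simp_all
    have "N dvd k * e"
      using mult_dvd_mono [of g k e e] unfolding N_eq by (simp add: g_def)
    then have "\<sigma> (zetaN N ^ e) = \<sigma> 1"
      using k(2) N_pos
      by (simp add: hom_power zetaN_in_QmuN hom_one zetaN_power_eq_1_iff flip: power_mult)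
    then have "zetaN N ^ e = 1"
      by (rule hom_inj [OF zetaN_power_in_QmuN [OF N_pos] QmuN_one])
    then show False
      using \<open>0 < e\<close> \<open>e < N\<close> by (simp add: zetaN_power_eq_1_iff N_pos nat_dvd_not_less)
  qed
  then show ?thesis
    using k that by blast
qed

lemma
  assumes "2 \<le> N"
  shows zetaN_image_gal_exp: "\<sigma> (zetaN N) = zetaN N ^ gal_exp N \<sigma>"
    and coprime_gal_exp: "coprime (gal_exp N \<sigma>) N"
proof -
  obtain k where k: "k < N" "coprime k N" "\<sigma> (zetaN N) = zetaN N ^ k"
    using zetaN_image_exponent [OF assms] .
  have "1 \<le> k" \<comment> \<open>this is where N \<ge> 2 is needed: \<open>coprime 0 N\<close> means N = 1\<close>
    using k(2) assms by (cases k) auto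
  have "gal_exp N \<sigma> = k"
    unfolding gal_exp_def
  proof (rule the_equality)
    fix k' assume "1 \<le> k' \<and> k' \<le> N - 1 \<and> coprime k' N \<and> \<sigma> (zetaN N) = zetaN N ^ k'"
    then show "k' = k"
      using k N_pos by (auto simp: zetaN_power_eq_iff cong_def)
  qed (use k \<open>1 \<le> k\<close> in auto)
  then show "\<sigma> (zetaN N) = zetaN N ^ gal_exp N \<sigma>" and "coprime (gal_exp N \<sigma>) N"
    using k by simp_all
qed

context
  fixes k :: nat
  assumes zetaN_image: "\<sigma> (zetaN N) = zetaN N ^ k"
begin

lemma inverse_zetaN_power: "\<sigma> (inverse (zetaN N ^ n)) = inverse (zetaN N ^ (k * n))"
  using zetaN_image
  by (simp add: hom_inverse hom_power zetaN_in_QmuN zetaN_power_in_QmuN N_pos flip: power_mult)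

lemma Fcoeff_delta: "x \<in> Xalph N \<Longrightarrow> \<sigma> (Fcoeff N t x) = Fcoeff N t (delta k x)"
proof (cases t; cases x)
  fix a z
  assume "x \<in> Xalph N" and letters: "t = TA a" "x = XZ z"
  then obtain m where "z = zetaN N ^ m"
    using muN_iff_zetaN_power [OF N_pos] by (auto simp: Xalph_def)
  then show ?thesis
    using letters N_pos
    by (simp add: Fcoeff_TA_zetaN_power inverse_zetaN_power mult_ac del: Fcoeff.simps(4)
        flip: power_mult)
qed (simp_all add: hom_zero hom_one)

lemma Fcoeff_tdelta: "\<sigma> (Fcoeff N t x) = Fcoeff N (tdelta N k t) x"
proof (cases t; cases x)
  fix a z
  assume letters: "t = TA a" "x = XZ z"
  show ?thesis
  proof (cases "z \<in> muN N")
    case True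
    then obtain m where "z = zetaN N ^ m"
      using muN_iff_zetaN_power [OF N_pos] by auto
    moreover have "[k * (m * a) = m * ((iota N k * a) mod N)] (mod N)"
      by (simp add: cong_def iota_def mod_mult_right_eq mod_mult_left_eq) (simp add: mult_ac)
    ultimately show ?thesis
      using letters N_pos
      by (simp add: Fcoeff_TA_zetaN_power inverse_zetaN_power zetaN_power_eq_iff
          del: Fcoeff.simps(4))
  qed (simp add: letters Fcoeff_not_muN hom_zero del: Fcoeff.simps(4))
qed (simp_all add: hom_zero hom_one)

end

lemma Fmap_coeffmap:
  assumes "2 \<le> N" and "f \<in> serT N"
  shows "Fmap N (coeffmap \<sigma> f) = Delta N \<sigma> (Fmap N f)"
proof
  fix v
  define k where "k = gal_exp N \<sigma>"
  obtain k' where "[k * k' = 1] (mod N)"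
    using cong_solve_coprime_nat [OF coprime_gal_exp [OF assms(1)]] unfolding k_def by auto
  then have inverse_delta: "delta k (delta k' x) = x" if "x \<in> Xalph N" for x
    using that by (simp add: delta_delta delta_cong_1 mult.commute)
  show "Fmap N (coeffmap \<sigma> f) v = Delta N \<sigma> (Fmap N f) v"
  proof (cases "v \<in> lists (Xalph N)")
    case True
    have "Delta N \<sigma> (Fmap N f) v = \<sigma> (Fmap N f (map (delta k') v))"
      unfolding Delta_def k_def [symmetric]
      by (simp add: map_delta_fibre [OF \<open>[k * k' = 1] (mod N)\<close> True])
    also have "\<dots> = Fmap N (coeffmap \<sigma> f) v"
      unfolding Fmap_image [OF assms(2)] length_map unfolding Fmap_def coeffmap_def
    proof (intro sum.cong refl arg_cong2 [where f = "(*)"] prod.cong)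
      fix w i
      assume "i \<in> {..<length v}"
      then have "v ! i \<in> Xalph N"
        using True by auto
      then have "\<sigma> (Fcoeff N (w ! i) (delta k' (v ! i))) =
          Fcoeff N (w ! i) (delta k (delta k' (v ! i)))"
        using Fcoeff_delta [OF zetaN_image_gal_exp [OF assms(1)]] delta_in_Xalph
        unfolding k_def by blast
      then show "\<sigma> (Fcoeff N (w ! i) (map (delta k') v ! i)) = Fcoeff N (w ! i) (v ! i)"
        using \<open>i \<in> {..<length v}\<close> \<open>v ! i \<in> Xalph N\<close> by (simp add: inverse_delta)
    qed
    finally show ?thesis ..
  next
    case False
    then have no_preimage: "{w \<in> lists (Xalph N). map (delta k) w = v} = {}"
      by (auto simp: delta_in_Xalph)
    show ?thesis
      unfolding Delta_def k_def [symmetric] no_preimage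
      using False by (simp add: Fmap_outside_lists)
  qed
qed

lemma Fmap_tDelta:
  assumes "2 \<le> N" and "f \<in> serT N"
  shows "Fmap N (tDelta N \<sigma> f) = coeffmap \<sigma> (Fmap N f)"
proof
  fix v :: "xletter list"
  define k where "k = gal_exp N \<sigma>"
  define W where "W = {w \<in> lists (Talph N). length w = length v}"
  define P where "P = (\<lambda>w. \<Prod>i<length v. Fcoeff N (w ! i) (v ! i))"
  have "finite W"
    unfolding W_def using finite_lists_length_eq [of "Talph N" "length v"]
    by (simp add: Talph_def lists_eq_set)
  have maps_W: "map (tdelta N k) ` W \<subseteq> W"
    using N_pos by (auto simp: W_def tdelta_in_Talph)
  have "Fmap N (tDelta N \<sigma> f) v =
      (\<Sum>w\<in>W. \<Sum>w'\<in>{w' \<in> W. map (tdelta N k) w' = w}. \<sigma> (f w') * P (map (tdelta N k) w'))"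
    unfolding Fmap_def tDelta_def W_def P_def k_def [symmetric] sum_distrib_right
    by (intro sum.cong refl) auto
  also have "\<dots> = (\<Sum>w'\<in>W. \<sigma> (f w') * P (map (tdelta N k) w'))"
    by (rule sum.group [OF \<open>finite W\<close> \<open>finite W\<close> maps_W])
  also have "\<dots> = coeffmap \<sigma> (Fmap N f) v"
    using zetaN_image_gal_exp [OF assms(1)]
    by (simp add: coeffmap_def Fmap_image assms(2) W_def P_def k_def Fcoeff_tdelta)
  finally show "Fmap N (tDelta N \<sigma> f) v = coeffmap \<sigma> (Fmap N f) v" .
qed

end

theorem lemma3p13:
  fixes N :: nat and \<sigma> :: "complex \<Rightarrow> complex"
  assumes "N \<ge> 3" and "\<sigma> \<in> GalN N"
  shows "(\<forall>f\<in>serT N. Fmap N (coeffmap \<sigma> f) = Delta N \<sigma> (Fmap N f)) \<and>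
         (\<forall>f\<in>serT N. Fmap N (tDelta N \<sigma> f) = coeffmap \<sigma> (Fmap N f))"
proof -
  interpret galois_automorphism N \<sigma>
    using assms by unfold_locales simp_all
  show ?thesis
    using assms(1) by (simp add: Fmap_coeffmap Fmap_tDelta)
qed

end
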